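(* Let $p\geq 1$ and let $\gamma=(1\,2\,\cdots\,p)\in S_p$ be the full cycle $\gamma(i)=i+1 \pmod p$. For every noncrossing partition $\pi\in NC(p)$, identified with its geodesic permutation (defined in the context), one has $$1+\mathrm{e}(\pi)=\#(\pi\gamma),$$ where $\mathrm{e}(\pi)$ is the number of blocks of $\pi$ of even cardinality and $\#(\sigma)$ denotes the number of cycles of a permutation $\sigma$.
   Context: $NC(p)$ denotes the set of noncrossing partitions of $\{1,\dots,p\}$. A noncrossing partition $\pi$ is identified with the permutation of $\{1,\dots,p\}$ whose cycles are the blocks of $\pi$, each block $\{i_1<i_2<\dots<i_k\}$ being the cycle $i_1\mapsto i_2\mapsto\cdots\mapsto i_k\mapsto i_1$ (these are exactly the permutations $\sigma$ with $|\sigma|+|\sigma^{-1}\gamma|=p-1$, where $|\sigma|$ is the minimal number of transpositions needed to write $\sigma$). For a permutation, $\#$ counts cycles; for a partition, $\#$ counts blocks. *)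

theory Defs
  imports Main "HOL-Library.Disjoint_Sets"
begin

definition gamma :: "nat \<Rightarrow> nat \<Rightarrow> nat" where
  "gamma p i = (if 1 \<le> i \<and> i < p then i + 1 else if i = p then 1 else i)"

definition noncrossing :: "nat set set \<Rightarrow> bool" where
  "noncrossing P \<longleftrightarrow> (\<forall>B1\<in>P. \<forall>B2\<in>P. \<forall>a b c d.
      B1 \<noteq> B2 \<and> a < b \<and> b < c \<and> c < d \<and> a \<in> B1 \<and> c \<in> B1 \<and> b \<in> B2 \<and> d \<in> B2 \<longrightarrow> False)"

definition NC :: "nat \<Rightarrow> nat set set set" where
  "NC p = {P. partition_on {1..p} P \<and> noncrossing P}"

text \<open>Permutation associated to a partition: each block {i1<...<ik} becomes the cycle
  i1 -> i2 -> ... -> ik -> i1; points outside the union are fixed.\<close>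
definition perm_of_partition :: "nat set set \<Rightarrow> nat \<Rightarrow> nat" where
  "perm_of_partition P i =
     (if \<exists>B\<in>P. i \<in> B then
        (let B = (THE B. B \<in> P \<and> i \<in> B) in
           if \<exists>j\<in>B. i < j then Min {j\<in>B. i < j} else Min B)
      else i)"

definition num_cycles :: "nat \<Rightarrow> (nat \<Rightarrow> nat) \<Rightarrow> nat" where
  "num_cycles p f = card {{(f ^^ k) i | k. True} | i. i \<in> {1..p}}"

definition even_blocks :: "nat set set \<Rightarrow> nat" where
  "even_blocks P = card {B\<in>P. even (card B)}"

end

theory Submission
  imports Defs
begin

(* We work with an arbitrary finite nonempty set S of naturals instead of {1..p}, with its
   full cycle nextc S (increasing order, the maximum wrapping to the minimum), and prove
   card (orbs S (perm_of_partition P o nextc S)) = 1 + even_blocks P by induction on |S|.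

   The basic operation is splice f s, which deletes the point s from its cycle under a
   bijection f of S; it keeps the number of cycles unless s was a fixed point.
   1. If P has a singleton block {s}, deleting s from S and from P splices s out of both
      pi and gamma, hence out of pi gamma; even blocks are unchanged.
   2. Otherwise, since P is noncrossing, some block B contains two points a < b that are
      consecutive in S. Both pi and gamma send a to b, and deleting a and b splices them out
      of pi gamma. A cycle is lost exactly when B = {a, b} (and one more when S = {a, b}),
      which matches the change of even_blocks.
   The theorem follows because gamma p agrees with nextc {1..p} on {1..p}. *)

section \<open>Orbits of a self-map\<close>

definition orb :: "('a \<Rightarrow> 'a) \<Rightarrow> 'a \<Rightarrow> 'a set" where
  "orb f x = {(f ^^ k) x | k. True}"

definition orbs :: "'a set \<Rightarrow> ('a \<Rightarrow> 'a) \<Rightarrow> 'a set set" where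
  "orbs S f = orb f ` S"

lemma num_cycles_eq_card_orbs: "num_cycles p f = card (orbs {1..p} f)"
  unfolding num_cycles_def orbs_def orb_def Setcompr_eq_image ..

lemma orbs_empty [simp]: "orbs {} f = {}"
  unfolding orbs_def by simp

lemma orb_self: "x \<in> orb f x"
  unfolding orb_def by (auto intro: exI[of _ 0])

lemma orb_step:
  assumes "y \<in> orb f x" shows "f y \<in> orb f x"
proof -
  obtain k where "y = (f ^^ k) x" using assms unfolding orb_def by blast
  then have "f y = (f ^^ Suc k) x" by simp
  then show ?thesis unfolding orb_def by blast
qed

lemma orb_subset_orb:
  assumes "y \<in> orb f x" shows "orb f y \<subseteq> orb f x"
proof
  fix z assume "z \<in> orb f y"
  then obtain j where "z = (f ^^ j) y" unfolding orb_def by blast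
  moreover obtain k where "y = (f ^^ k) x" using assms unfolding orb_def by blast
  ultimately have "z = (f ^^ (j + k)) x" by (simp add: funpow_add)
  then show "z \<in> orb f x" unfolding orb_def by blast
qed

lemma funpow_in: "f ` S \<subseteq> S \<Longrightarrow> x \<in> S \<Longrightarrow> (f ^^ k) x \<in> S"
  by (induction k) auto

lemma orb_subset: "f ` S \<subseteq> S \<Longrightarrow> x \<in> S \<Longrightarrow> orb f x \<subseteq> S"
  unfolding orb_def using funpow_in[of f S x] by auto

lemma funpow_fixpoint: "f x = x \<Longrightarrow> (f ^^ k) x = x"
  by (induction k) simp_all

lemma orb_fixpoint: "f x = x \<Longrightarrow> orb f x = {x}"
  unfolding orb_def using funpow_fixpoint[of f x] by auto

lemma orbs_cong:
  assumes maps: "f ` S \<subseteq> S" and eq: "\<And>x. x \<in> S \<Longrightarrow> f x = g x"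
  shows "orbs S f = orbs S g"
proof -
  have pow: "(f ^^ k) x = (g ^^ k) x" if x: "x \<in> S" for x k
  proof (induction k)
    case (Suc k)
    then show ?case using eq[OF funpow_in[OF maps x, of k]] by simp
  qed simp
  have "orb f x = orb g x" if "x \<in> S" for x
    unfolding orb_def using pow[OF that] by presburger
  then show ?thesis unfolding orbs_def by (rule image_cong[OF refl])
qed

lemma bij_betw_self_image: "bij_betw f S S \<Longrightarrow> f ` S \<subseteq> S"
  by (simp add: bij_betw_def)

text \<open>For a bijection of a finite set, orbits are cycles: every point returns to itself,
  so lying in a common orbit is symmetric and the orbits partition the set.\<close>
context
  fixes S :: "'a set" and f :: "'a \<Rightarrow> 'a"
  assumes fin: "finite S" and bij: "bij_betw f S S"
begin

lemma funpow_inj: "inj_on (f ^^ k) S"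
  using bij_betw_imp_inj_on[OF bij_betw_funpow[OF bij]] .

lemma orb_periodic:
  assumes x: "x \<in> S" obtains n where "n > 0" "(f ^^ n) x = x"
proof -
  note iter_in = funpow_in[OF bij_betw_self_image[OF bij] x]
  have "range (\<lambda>k. (f ^^ k) x) \<subseteq> S" by (rule image_subsetI) (rule iter_in)
  then have "finite (range (\<lambda>k. (f ^^ k) x))" by (rule finite_subset[OF _ fin])
  then have "\<not> inj (\<lambda>k. (f ^^ k) x)" using finite_imageD infinite_UNIV_nat by auto
  then obtain i j where "i \<noteq> j" "(f ^^ i) x = (f ^^ j) x" unfolding inj_def by auto
  then obtain i j where ij: "i < j" "(f ^^ j) x = (f ^^ i) x"
    by (cases i j rule: linorder_cases) auto
  have "(f ^^ j) x = (f ^^ i) ((f ^^ (j - i)) x)"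
    using ij(1) funpow_add[of i "j - i" f] by simp
  then have "(f ^^ i) ((f ^^ (j - i)) x) = (f ^^ i) x" using ij(2) by simp
  then have "(f ^^ (j - i)) x = x" by (rule inj_onD[OF funpow_inj _ iter_in x])
  then show thesis using that[of "j - i"] ij(1) by simp
qed

lemma orb_sym:
  assumes x: "x \<in> S" and y: "y \<in> orb f x" shows "x \<in> orb f y"
proof -
  obtain n where n: "n > 0" "(f ^^ n) x = x" using orb_periodic[OF x] by blast
  obtain k where k: "y = (f ^^ k) x" using y unfolding orb_def by blast
  have "(f ^^ (n * k - k)) y = (f ^^ ((n * k - k) + k)) x"
    unfolding k funpow_add by simp
  also have "(n * k - k) + k = n * k" using n(1) by simp
  also have "(f ^^ (n * k)) x = x"
    using funpow_fixpoint[of "f ^^ n" x k, OF n(2)] unfolding funpow_mult .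
  finally have "(f ^^ (n * k - k)) y = x" .
  then show ?thesis unfolding orb_def by blast
qed

lemma orb_eq:
  assumes "x \<in> S" and "y \<in> orb f x" shows "orb f y = orb f x"
  using orb_subset_orb[OF assms(2)] orb_subset_orb[OF orb_sym[OF assms]] by (rule equalityI)

end

section \<open>Deleting a point from its cycle\<close>

definition splice :: "('a \<Rightarrow> 'a) \<Rightarrow> 'a \<Rightarrow> 'a \<Rightarrow> 'a" where
  "splice f s x = (if f x = s then f s else f x)"

lemma splice_alt: "splice f s x = f (if f x = s then s else x)"
  unfolding splice_def by simp

lemma splice_cong: "f y = g y \<Longrightarrow> f s = g s \<Longrightarrow> splice f s y = splice g s y"
  unfolding splice_def by simp

context
  fixes S :: "'a set" and f :: "'a \<Rightarrow> 'a" and s :: 'a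
  assumes fin: "finite S" and bij: "bij_betw f S S" and s: "s \<in> S"
begin

lemma splice_bij: "bij_betw (splice f s) (S - {s}) (S - {s})"
proof -
  have f_in: "f x \<in> S" if "x \<in> S" for x using bij_betw_self_image[OF bij] that by blast
  have f_eq_iff: "f x = f y \<longleftrightarrow> x = y" if "x \<in> S" "y \<in> S" for x y
    using bij_betw_imp_inj_on[OF bij] that by (auto dest: inj_onD)
  have "splice f s x \<in> S - {s}" if x: "x \<in> S - {s}" for x
  proof (cases "f x = s")
    case True
    then have "f s \<noteq> s" using f_eq_iff[of x s] x s by auto
    then show ?thesis using True f_in[OF s] by (simp add: splice_def)
  next
    case False
    then show ?thesis using f_in x by (simp add: splice_def)
  qed
  then have "splice f s ` (S - {s}) \<subseteq> S - {s}" by (rule image_subsetI)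
  moreover have "inj_on (splice f s) (S - {s})"
  proof (rule inj_onI)
    fix x y assume x: "x \<in> S - {s}" and y: "y \<in> S - {s}" and eq: "splice f s x = splice f s y"
    have "(if f x = s then s else x) = (if f y = s then s else y)"
      using eq x y s unfolding splice_alt by (subst f_eq_iff[symmetric]) auto
    then show "x = y" using f_eq_iff[of x y] x y by (auto split: if_split_asm)
  qed
  ultimately show ?thesis
    unfolding bij_betw_def using endo_inj_surj[of "S - {s}"] fin by blast
qed

lemma splice_orb:
  assumes x: "x \<in> S - {s}"
  shows "orb (splice f s) x = orb f x - {s}"
proof
  let ?g = "splice f s"
  have "(?g ^^ k) x \<in> orb f x" for k
  proof (induction k)
    case (Suc k)
    have "?g y \<in> orb f x" if "y \<in> orb f x" for y
      using orb_step[OF that] orb_step[OF orb_step[OF that]] by (cases "f y = s") (simp_all add: splice_def)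
    then show ?case using Suc by simp
  qed (simp add: orb_self)
  moreover have "(?g ^^ k) x \<in> S - {s}" for k
    using funpow_in[OF bij_betw_self_image[OF splice_bij] x] .
  ultimately show "orb ?g x \<subseteq> orb f x - {s}" unfolding orb_def by (auto simp del: funpow.simps)
next
  let ?g = "splice f s"
  have reach: "(f ^^ k) x \<in> orb ?g x \<or> ((f ^^ k) x = s \<and> f ((f ^^ k) x) \<in> orb ?g x)" for k
  proof (induction k)
    case (Suc k)
    define z where "z = (f ^^ k) x"
    have "f z \<in> orb ?g x \<or> (f z = s \<and> f (f z) \<in> orb ?g x)"
    proof (cases "z \<in> orb ?g x")
      case True
      then have "?g z \<in> orb ?g x" by (rule orb_step)
      then show ?thesis by (auto simp: splice_def split: if_split_asm)
    next
      case False
      then show ?thesis using Suc.IH unfolding z_def by blast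
    qed
    then show ?case unfolding z_def by simp
  qed (simp add: orb_self)
  show "orb f x - {s} \<subseteq> orb ?g x"
  proof
    fix y assume "y \<in> orb f x - {s}"
    then obtain k where "y = (f ^^ k) x" "y \<noteq> s" unfolding orb_def by blast
    then show "y \<in> orb ?g x" using reach[of k] by simp
  qed
qed

lemma orbs_splice: "orbs (S - {s}) (splice f s) = (\<lambda>Q. Q - {s}) ` (orbs S f - {{s}})"
proof (rule equalityI)
  show "orbs (S - {s}) (splice f s) \<subseteq> (\<lambda>Q. Q - {s}) ` (orbs S f - {{s}})"
  proof
    fix Q assume "Q \<in> orbs (S - {s}) (splice f s)"
    then obtain x where x: "x \<in> S - {s}" "Q = orb (splice f s) x" unfolding orbs_def by auto
    have "orb f x \<in> orbs S f - {{s}}" using x(1) orb_self[of x f] unfolding orbs_def by auto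
    then show "Q \<in> (\<lambda>Q. Q - {s}) ` (orbs S f - {{s}})" using splice_orb[OF x(1)] x(2) by simp
  qed
next
  show "(\<lambda>Q. Q - {s}) ` (orbs S f - {{s}}) \<subseteq> orbs (S - {s}) (splice f s)"
  proof
    fix Q' assume "Q' \<in> (\<lambda>Q. Q - {s}) ` (orbs S f - {{s}})"
    then obtain x where x: "x \<in> S" "orb f x \<noteq> {s}" "Q' = orb f x - {s}"
      unfolding orbs_def by auto
    txt \<open>An orbit other than \<open>{s}\<close> contains a point \<open>y \<noteq> s\<close>, from which it is generated.\<close>
    obtain y where y: "y \<in> orb f x" "y \<noteq> s" using x(2) orb_self[of x f] by blast
    have yS: "y \<in> S - {s}" using orb_subset[OF bij_betw_self_image[OF bij] x(1)] y by blast
    have "Q' = orb (splice f s) y" using splice_orb[OF yS] orb_eq[OF fin bij x(1) y(1)] x(3) by simp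
    then show "Q' \<in> orbs (S - {s}) (splice f s)" using yS unfolding orbs_def by simp
  qed
qed

lemma orbs_splice_inj: "inj_on (\<lambda>Q. Q - {s}) (orbs S f - {{s}})"
proof (rule inj_onI)
  fix Q1 Q2 assume Q1: "Q1 \<in> orbs S f - {{s}}" and Q2: "Q2 \<in> orbs S f - {{s}}"
    and eq: "Q1 - {s} = Q2 - {s}"
  obtain x1 where x1: "x1 \<in> S" "Q1 = orb f x1" using Q1 unfolding orbs_def by auto
  obtain x2 where x2: "x2 \<in> S" "Q2 = orb f x2" using Q2 unfolding orbs_def by auto
  obtain y where y: "y \<in> Q1" "y \<noteq> s" using Q1 x1(2) orb_self[of x1 f] by blast
  have "orb f y = Q1" using orb_eq[OF fin bij x1(1)] y(1) x1(2) by simp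
  moreover have "orb f y = Q2" using orb_eq[OF fin bij x2(1)] y eq x2(2) by blast
  ultimately show "Q1 = Q2" by simp
qed

lemma singleton_orb_iff: "{s} \<in> orbs S f \<longleftrightarrow> f s = s"
proof
  assume "{s} \<in> orbs S f"
  then obtain x where o: "orb f x = {s}" unfolding orbs_def by auto
  have "x = s" using orb_self[of x f] o by simp
  moreover have "f x = s" using orb_step[OF orb_self[of x f]] o by simp
  ultimately show "f s = s" by simp
next
  assume "f s = s"
  then show "{s} \<in> orbs S f" using orb_fixpoint[of f s] s unfolding orbs_def by (metis image_eqI)
qed

lemma card_orbs_splice:
  "card (orbs (S - {s}) (splice f s)) + (if f s = s then 1 else 0) = card (orbs S f)"
proof -
  have eq: "card (orbs (S - {s}) (splice f s)) = card (orbs S f - {{s}})"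
    unfolding orbs_splice using card_image[OF orbs_splice_inj] .
  have fin_orbs: "finite (orbs S f)" unfolding orbs_def using fin by simp
  show ?thesis
  proof (cases "f s = s")
    case True
    then have "{s} \<in> orbs S f" using singleton_orb_iff by simp
    then have "card (orbs S f - {{s}}) + 1 = card (orbs S f)"
      using card_Suc_Diff1[OF fin_orbs] by simp
    then show ?thesis using eq True by simp
  next
    case False
    then have "orbs S f - {{s}} = orbs S f" using singleton_orb_iff by simp
    then show ?thesis using eq False by simp
  qed
qed

end

section \<open>The cyclic successor in a finite set of naturals\<close>

text \<open>\<open>nextc S\<close> runs through the finite set \<open>S\<close> in increasing order and jumps from the
  maximum back to the minimum; it is the full cycle of \<open>S\<close>, and on a block it is exactly
  the cycle that \<open>perm_of_partition\<close> assigns to that block.\<close>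
definition nextc :: "nat set \<Rightarrow> nat \<Rightarrow> nat" where
  "nextc S i = (if \<exists>j\<in>S. i < j then Min {j\<in>S. i < j} else Min S)"

definition nxt :: "nat set \<Rightarrow> nat \<Rightarrow> nat \<Rightarrow> bool" where
  "nxt S x y \<longleftrightarrow> y \<in> S \<and> ((x < y \<and> (\<forall>z\<in>S. x < z \<longrightarrow> y \<le> z)) \<or>
     ((\<forall>z\<in>S. z \<le> x) \<and> (\<forall>z\<in>S. y \<le> z)))"

lemma nxt_unique: "nxt S x y \<Longrightarrow> nxt S x y' \<Longrightarrow> y = y'"
  unfolding nxt_def by (auto; force)

lemma nxt_nextc:
  assumes "finite S" "S \<noteq> {}"
  shows "nxt S x (nextc S x)"
proof (cases "\<exists>j\<in>S. x < j")
  case True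
  then have fin: "finite {j\<in>S. x < j}" "{j\<in>S. x < j} \<noteq> {}" using assms by auto
  show ?thesis
    using True Min_in[OF fin] Min_le[OF fin(1)] unfolding nxt_def nextc_def by auto
next
  case False
  then show ?thesis using Min_in[OF assms] Min_le[OF assms(1)] unfolding nxt_def nextc_def by auto
qed

lemma nextc_iff: "finite S \<Longrightarrow> S \<noteq> {} \<Longrightarrow> nextc S x = y \<longleftrightarrow> nxt S x y"
  using nxt_nextc nxt_unique by metis

lemma nextc_in: "finite S \<Longrightarrow> S \<noteq> {} \<Longrightarrow> nextc S x \<in> S"
  using nxt_nextc unfolding nxt_def by blast

lemma nextc_bij:
  assumes fin: "finite S" shows "bij_betw (nextc S) S S"
proof -
  have "inj_on (nextc S) S"
  proof (rule inj_onI)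
    fix x y assume "x \<in> S" "y \<in> S" "nextc S x = nextc S y"
    moreover have "S \<noteq> {}" using \<open>x \<in> S\<close> by auto
    ultimately have "nxt S x (nextc S x)" "nxt S y (nextc S x)" "x \<in> S" "y \<in> S"
      using nxt_nextc[OF fin] by metis+
    then show "x = y" unfolding nxt_def by (auto; force)
  qed
  moreover have "nextc S ` S \<subseteq> S" using nextc_in[OF fin] by blast
  ultimately show ?thesis unfolding bij_betw_def using endo_inj_surj[OF fin] by blast
qed

lemma nextc_fixed_iff:
  assumes "finite S" "s \<in> S" shows "nextc S s = s \<longleftrightarrow> S = {s}"
proof
  assume "nextc S s = s"
  then have "nxt S s s" using nxt_nextc[OF assms(1), of s] assms(2) by auto
  then show "S = {s}" using assms(2) unfolding nxt_def by (auto intro: antisym)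
qed (simp add: nextc_def)

lemma nextc_swap:
  assumes fin: "finite S" and ab: "a < b" "a \<in> S"
    and "nextc S a = b" "nextc S b = a"
  shows "S \<subseteq> {a, b}"
proof -
  have "nxt S a b" "nxt S b a" using assms nextc_iff[OF fin] by blast+
  then show ?thesis using ab(1) unfolding nxt_def by (auto; force)
qed

lemma nextc_subset:
  assumes "finite S" "T \<subseteq> S" "a \<in> T" "b \<in> T" "a < b" "nextc S a = b"
  shows "nextc T a = b"
proof -
  have "nxt S a b" using assms nextc_iff[OF assms(1)] by blast
  then have "nxt T a b" using assms(2-5) unfolding nxt_def by auto
  then show ?thesis using nextc_iff[of T] assms(1-3) finite_subset by blast
qed

lemma nxt_skip:
  assumes xs: "nxt S x s" and st: "nxt S s t" and ts: "t \<noteq> s" and x: "x \<in> S" "x \<noteq> s"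
  shows "nxt (S - {s}) x t"
proof -
  have t: "t \<in> S - {s}" using st ts unfolding nxt_def by simp
  consider (up) "x < s" "\<forall>z\<in>S. x < z \<longrightarrow> s \<le> z" | (wrap) "\<forall>z\<in>S. z \<le> x" "\<forall>z\<in>S. s \<le> z"
    using xs unfolding nxt_def by blast
  then show ?thesis
  proof cases
    case up
    from st consider "s < t" "\<forall>z\<in>S. s < z \<longrightarrow> t \<le> z" | "\<forall>z\<in>S. z \<le> s" "\<forall>z\<in>S. t \<le> z"
      unfolding nxt_def by blast
    then show ?thesis
    proof cases
      case 1
      then show ?thesis using up t unfolding nxt_def by (auto simp: le_less)
    next
      case 2
      have "z \<le> x" if "z \<in> S - {s}" for z
      proof -
        have "z < s" using that 2(1) by auto
        then show ?thesis using that up(2) by (auto simp: not_less[symmetric])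
      qed
      then show ?thesis using 2 t unfolding nxt_def by auto
    qed
  next
    case wrap
    then have "s < t" "\<forall>z\<in>S. s < z \<longrightarrow> t \<le> z" using st x t unfolding nxt_def by force+
    then show ?thesis using wrap t unfolding nxt_def by (auto simp: le_less)
  qed
qed

lemma nextc_delete:
  assumes fin: "finite S" and x: "x \<in> S" "x \<noteq> s"
  shows "nextc (S - {s}) x = splice (nextc S) s x"
proof -
  have ne: "S \<noteq> {}" "S - {s} \<noteq> {}" using x by auto
  have nx: "nxt S x (nextc S x)" using nxt_nextc[OF fin ne(1)] .
  have "nxt (S - {s}) x (splice (nextc S) s x)"
  proof (cases "nextc S x = s")
    case True
    have "nextc S s \<noteq> s"
      using True x bij_betw_imp_inj_on[OF nextc_bij[OF fin]] nextc_in[OF fin ne(1), of x]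
      by (metis inj_onD)
    moreover have "nxt S s (nextc S s)" using nxt_nextc[OF fin ne(1)] .
    ultimately show ?thesis using nxt_skip nx True x unfolding splice_def by simp
  next
    case False
    then show ?thesis using nx unfolding nxt_def splice_def by auto
  qed
  then show ?thesis using nextc_iff[of "S - {s}"] fin ne(2) by blast
qed

lemma nextc_delete_two_points:
  assumes fin: "finite S" and ab: "b \<in> S" "a \<noteq> b" and x: "x \<in> S" "x \<noteq> a" "x \<noteq> b"
  shows "nextc (S - {a} - {b}) x = splice (splice (nextc S) a) b x"
proof -
  have "nextc (S - {a} - {b}) x = splice (nextc (S - {a})) b x"
    using nextc_delete[of "S - {a}"] fin x by simp
  also have "\<dots> = splice (splice (nextc S) a) b x"
    using nextc_delete[OF fin] ab x by (intro splice_cong) auto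
  finally show ?thesis .
qed

lemma gamma_eq_nextc:
  assumes x: "x \<in> {1..p}" shows "gamma p x = nextc {1..p} x"
proof -
  have "nxt {1..p} x (gamma p x)" using x unfolding nxt_def gamma_def by auto
  moreover have "finite {1..p}" "{1..p} \<noteq> {}" using x by auto
  ultimately show ?thesis using nextc_iff by metis
qed

section \<open>Splicing and composition\<close>

text \<open>Splicing commutes with composition in the two situations arising in the induction:
  deleting a point fixed by the left factor, and deleting two points \<open>a\<close>, \<open>b\<close> that both
  factors send from \<open>a\<close> to \<open>b\<close>.\<close>
lemma splice_comp_fixed:
  assumes p: "bij_betw p S S" and g: "bij_betw g S S"
    and s: "s \<in> S" "p s = s" and x: "x \<in> S" "x \<noteq> s"
  shows "splice p s (splice g s x) = splice (p \<circ> g) s x"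
proof -
  have p_s: "p u = s \<longleftrightarrow> u = s" if "u \<in> S" for u
    using s inj_onD[OF bij_betw_imp_inj_on[OF p] _ that s(1)] by auto
  have g_s: "g x \<noteq> g s" using x s inj_onD[OF bij_betw_imp_inj_on[OF g] _ x(1) s(1)] by auto
  have gS: "g u \<in> S" if "u \<in> S" for u using bij_betw_imp_surj_on[OF g] that by blast
  show ?thesis using p_s[OF gS[OF x(1)]] p_s[OF gS[OF s(1)]] g_s s(2)
    unfolding splice_def by auto
qed

lemma splice_splice_comp:
  assumes p: "bij_betw p S S" and g: "bij_betw g S S"
    and ab: "a \<in> S" "b \<in> S" "a \<noteq> b" "g a = b" "p a = b"
    and x: "x \<in> S" "x \<noteq> a" "x \<noteq> b"
  shows "splice (splice p a) b (splice (splice g a) b x) = splice (splice (p \<circ> g) a) b x"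
proof -
  have ip: "u = v" if "u \<in> S" "v \<in> S" "p u = p v" for u v
    using inj_onD[OF bij_betw_imp_inj_on[OF p]] that by blast
  have ig: "u = v" if "u \<in> S" "v \<in> S" "g u = g v" for u v
    using inj_onD[OF bij_betw_imp_inj_on[OF g]] that by blast
  have gS: "g u \<in> S" if "u \<in> S" for u using bij_betw_imp_surj_on[OF g] that by blast
  txt \<open>\<open>y\<close> is the image of \<open>x\<close> under \<open>g\<close> with \<open>a\<close> (and hence \<open>b\<close>) skipped; both
    sides equal the image of \<open>y\<close> under \<open>p\<close> with \<open>a\<close> skipped.\<close>
  define y where "y = (if g x = a then g b else g x)"
  have gx: "g x \<noteq> b" "g x = a \<Longrightarrow> g b \<noteq> a" "g b \<noteq> b"
    using ig[OF x(1) ab(1)] ig[OF x(1) ab(2)] ig[OF ab(2) ab(1)] ab x by auto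
  have y: "y \<in> S" "y \<noteq> a" "y \<noteq> b" unfolding y_def using gS ab x gx by auto
  have py: "p y \<noteq> b" "p y = a \<Longrightarrow> p b \<noteq> a" "p b \<noteq> b"
    using ip[OF y(1) ab(1)] ip[OF y(1) ab(2)] ip[OF ab(2) ab(1)] ab y by auto
  have lhs: "splice (splice g a) b x = y" unfolding y_def splice_def using gx ab by auto
  have "splice (splice p a) b y = (if p y = a then p b else p y)"
    unfolding splice_def using py ab by auto
  moreover have "splice (splice (p \<circ> g) a) b x = (if p y = a then p b else p y)"
    unfolding splice_def using ab py y_def by auto
  ultimately show ?thesis using lhs by simp
qed

section \<open>Partitions and their permutations\<close>

lemma partition_block_unique:
  "partition_on S P \<Longrightarrow> B \<in> P \<Longrightarrow> C \<in> P \<Longrightarrow> x \<in> B \<Longrightarrow> x \<in> C \<Longrightarrow> B = C"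
  unfolding partition_on_def disjoint_def disjnt_def by blast

lemma partition_block_subset: "partition_on S P \<Longrightarrow> B \<in> P \<Longrightarrow> B \<subseteq> S"
  unfolding partition_on_def by blast

lemma partition_block_finite: "finite S \<Longrightarrow> partition_on S P \<Longrightarrow> B \<in> P \<Longrightarrow> finite B"
  using finite_subset[OF partition_block_subset] by blast

lemma perm_of_partition_block:
  assumes P: "partition_on S P" and B: "B \<in> P" and i: "i \<in> B"
  shows "perm_of_partition P i = nextc B i"
proof -
  have "(THE C. C \<in> P \<and> i \<in> C) = B"
    using partition_block_unique[OF P _ B _ i] B i by (intro the_equality) blast+
  moreover have "\<exists>C\<in>P. i \<in> C" using B i by blast
  ultimately show ?thesis unfolding perm_of_partition_def nextc_def Let_def by simp
qed

lemma perm_of_partition_in_block: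
  assumes "finite S" "partition_on S P" "B \<in> P" "i \<in> B"
  shows "perm_of_partition P i \<in> B"
proof -
  have "finite B" "B \<noteq> {}" using partition_block_finite[OF assms(1-3)] assms(4) by auto
  then show ?thesis using perm_of_partition_block[OF assms(2-4)] nextc_in by simp
qed

lemma perm_of_partition_bij:
  assumes fin: "finite S" and P: "partition_on S P"
  shows "bij_betw (perm_of_partition P) S S"
proof -
  let ?p = "perm_of_partition P"
  have block: "\<exists>B\<in>P. x \<in> B" if "x \<in> S" for x using partition_onD1[OF P] that by auto
  have "?p x \<in> S" if "x \<in> S" for x
    using block[OF that] perm_of_partition_in_block[OF fin P] partition_block_subset[OF P] by blast
  then have "?p ` S \<subseteq> S" by (rule image_subsetI)
  moreover have "inj_on ?p S"
  proof (rule inj_onI)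
    fix x y assume x: "x \<in> S" and y: "y \<in> S" and eq: "?p x = ?p y"
    obtain B where B: "B \<in> P" "x \<in> B" using block[OF x] by blast
    obtain C where C: "C \<in> P" "y \<in> C" using block[OF y] by blast
    have "?p x \<in> B" "?p x \<in> C"
      using perm_of_partition_in_block[OF fin P] B C eq by metis+
    then have BC: "B = C" using partition_block_unique[OF P B(1) C(1)] by simp
    have "nextc B x = nextc B y"
      using eq perm_of_partition_block[OF P B] perm_of_partition_block[OF P C] BC by simp
    moreover have "inj_on (nextc B) B"
      using bij_betw_imp_inj_on[OF nextc_bij[OF partition_block_finite[OF fin P B(1)]]] .
    ultimately show "x = y" using inj_onD B(2) C(2) BC by metis
  qed
  ultimately show ?thesis unfolding bij_betw_def using endo_inj_surj[OF fin] by simp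
qed

definition delete_point :: "'a set set \<Rightarrow> 'a \<Rightarrow> 'a set set" where
  "delete_point P s = (\<lambda>B. B - {s}) ` P - {{}}"

lemma partition_on_delete_point:
  assumes "partition_on S P" shows "partition_on (S - {s}) (delete_point P s)"
proof -
  have "(\<lambda>B. B - {s}) = (\<inter>) (- {s})" "S - {s} = - {s} \<inter> S" by auto
  then show ?thesis
    unfolding delete_point_def using partition_on_restrict[OF assms, of "- {s}"] by metis
qed

lemma noncrossing_delete_point: "noncrossing P \<Longrightarrow> noncrossing (delete_point P s)"
  unfolding noncrossing_def delete_point_def by blast

lemma delete_point_block:
  assumes P: "partition_on S P" and B: "B \<in> P" and s: "s \<in> B"
  shows "delete_point P s = (P - {B}) \<union> ({B - {s}} - {{}})"
proof -
  have "C - {s} = C" "C \<noteq> {}" if "C \<in> P - {B}" for C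
    using that partition_block_unique[OF P _ B _ s] partition_onD3[OF P] by auto
  then show ?thesis unfolding delete_point_def using B by force
qed

lemma perm_of_partition_delete_point:
  assumes fin: "finite S" and P: "partition_on S P" and y: "y \<in> S" "y \<noteq> s"
  shows "perm_of_partition (delete_point P s) y = splice (perm_of_partition P) s y"
proof -
  obtain C where C: "C \<in> P" "y \<in> C" using partition_onD1[OF P] y(1) by blast
  have C': "C - {s} \<in> delete_point P s" "y \<in> C - {s}" using C y unfolding delete_point_def by auto
  have finC: "finite C" using partition_block_finite[OF fin P C(1)] .
  have "perm_of_partition (delete_point P s) y = nextc (C - {s}) y"
    using perm_of_partition_block[OF partition_on_delete_point[OF P] C'] .
  also have "\<dots> = splice (nextc C) s y" using nextc_delete[OF finC C(2) y(2)] .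
  also have "\<dots> = splice (perm_of_partition P) s y"
  proof -
    have "nextc C y = s \<Longrightarrow> s \<in> C" using nextc_in[OF finC] C(2) by force
    then show ?thesis
      using perm_of_partition_block[OF P C(1)] C(2) unfolding splice_def by auto
  qed
  finally show ?thesis .
qed

lemma perm_of_partition_delete_two_points:
  assumes fin: "finite S" and P: "partition_on S P"
    and ab: "b \<in> S" "a \<noteq> b" and y: "y \<in> S" "y \<noteq> a" "y \<noteq> b"
  shows "perm_of_partition (delete_point (delete_point P a) b) y
    = splice (splice (perm_of_partition P) a) b y"
proof -
  have "perm_of_partition (delete_point (delete_point P a) b) y
      = splice (perm_of_partition (delete_point P a)) b y"
    using perm_of_partition_delete_point[OF _ partition_on_delete_point[OF P]] fin y by simp
  also have "\<dots> = splice (splice (perm_of_partition P) a) b y"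
    using perm_of_partition_delete_point[OF fin P] ab y by (intro splice_cong) auto
  finally show ?thesis .
qed

lemma even_blocks_insert:
  "finite P \<Longrightarrow> B \<notin> P \<Longrightarrow> even_blocks (insert B P) = even_blocks P + (if even (card B) then 1 else 0)"
proof -
  assume "finite P" "B \<notin> P"
  moreover have "{C \<in> insert B P. even (card C)} =
      (if even (card B) then insert B {C \<in> P. even (card C)} else {C \<in> P. even (card C)})"
    by auto
  ultimately show ?thesis unfolding even_blocks_def by simp
qed

lemma even_blocks_delete_singleton:
  assumes fin: "finite S" and P: "partition_on S P" and s: "{s} \<in> P"
  shows "even_blocks (delete_point P s) = even_blocks P"
proof -
  have "delete_point P s = P - {{s}}" using delete_point_block[OF P s] by simp
  moreover have "P = insert {s} (P - {{s}})" using s by blast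
  ultimately show ?thesis
    using even_blocks_insert[of "P - {{s}}" "{s}"] finite_elements[OF fin P] by simp
qed

text \<open>Deleting two points of one block keeps the parity of that block, unless the block
  disappears; then exactly one even block is lost.\<close>
lemma even_blocks_delete_pair:
  assumes fin: "finite S" and P: "partition_on S P"
    and B: "B \<in> P" "a \<in> B" "b \<in> B" "a \<noteq> b"
  shows "even_blocks (delete_point (delete_point P a) b) + (if B = {a, b} then 1 else 0)
    = even_blocks P"
proof -
  let ?B' = "B - {a} - {b}"
  have finP: "finite (P - {B})" using finite_elements[OF fin P] by simp
  have outside: "C \<notin> P - {B}" if "C \<subseteq> B" "C \<noteq> {}" for C
    using that partition_block_unique[OF P _ B(1)] by blast
  have P1: "delete_point P a = insert (B - {a}) (P - {B})"
    using delete_point_block[OF P B(1,2)] B(3,4) by auto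
  have "B - {a} \<in> delete_point P a" "b \<in> B - {a}" using P1 B(3,4) by auto
  then have "delete_point (delete_point P a) b = (delete_point P a - {B - {a}}) \<union> ({?B'} - {{}})"
    using delete_point_block[OF partition_on_delete_point[OF P]] by blast
  also have "delete_point P a - {B - {a}} = P - {B}"
    unfolding P1 using outside[of "B - {a}"] B(3,4) by auto
  finally have P2: "delete_point (delete_point P a) b = (P - {B}) \<union> ({?B'} - {{}})" .
  have EP: "even_blocks P = even_blocks (P - {B}) + (if even (card B) then 1 else 0)"
    using even_blocks_insert[OF finP, of B] B(1) insert_Diff[OF B(1)] by simp
  show ?thesis
  proof (cases "?B' = {}")
    case True
    then have "B = {a, b}" using B(2-3) by blast
    then show ?thesis using P2 EP True B(4) by simp
  next
    case False
    have finB: "finite B" using partition_block_finite[OF fin P B(1)] .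
    have "{a, b} \<subseteq> B" using B(2,3) by simp
    then have "card {a, b} \<le> card B" by (rule card_mono[OF finB])
    then have "card ?B' + 2 = card B" using finB B(2-4) by (simp add: card_Diff_singleton_if)
    then have "even (card ?B') = even (card B)" by (metis even_add even_numeral)
    moreover have "B \<noteq> {a, b}" using False by blast
    moreover have "?B' \<notin> P - {B}" using outside[of ?B'] False by blast
    ultimately show ?thesis using P2 EP False even_blocks_insert[OF finP] by simp
  qed
qed

text \<open>A noncrossing partition without singletons has a block containing two elements \<open>a < b\<close>
  that are consecutive in the ground set: take a pair in a common block with minimal gap;
  a point strictly between them would either give a pair with smaller gap or a crossing.\<close>
lemma noncrossing_adjacent_pair:
  assumes fin: "finite S" and P: "partition_on S P" and nc: "noncrossing P"
    and no_singleton: "\<And>s. {s} \<notin> P" and ne: "S \<noteq> {}"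
  obtains B a b where "B \<in> P" "a \<in> B" "b \<in> B" "a < b" "nextc S a = b"
proof -
  define gap where "gap d \<longleftrightarrow> (\<exists>B\<in>P. \<exists>a\<in>B. \<exists>b\<in>B. a < b \<and> b - a = d)" for d
  have other: "\<exists>y\<in>C. y \<noteq> x" if "C \<in> P" "x \<in> C" for C x
  proof (rule ccontr)
    assume "\<not> ?thesis"
    then have "C = {x}" using that(2) by blast
    then show False using no_singleton that(1) by simp
  qed
  have gap_of: "gap (max x y - min x y)" if "C \<in> P" "x \<in> C" "y \<in> C" "x \<noteq> y" for C x y
  proof (cases "x < y")
    case True
    then show ?thesis using that unfolding gap_def by (auto simp: max_def min_def)
  next
    case False
    then have "y < x" using that(4) by simp
    then show ?thesis using that unfolding gap_def by (auto simp: max_def min_def)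
  qed
  obtain x B0 where "B0 \<in> P" "x \<in> B0" using partition_onD1[OF P] ne by blast
  then have "\<exists>d. gap d" using other gap_of by metis
  then obtain d where d: "gap d" "\<And>d'. d' < d \<Longrightarrow> \<not> gap d'"
    using exists_least_iff[of gap] by blast
  then obtain B a b where B: "B \<in> P" "a \<in> B" "b \<in> B" "a < b" "b - a = d"
    unfolding gap_def by blast
  have "b \<le> z" if z: "z \<in> S" "a < z" for z
  proof (rule ccontr)
    assume "\<not> b \<le> z"
    then have zb: "z < b" by simp
    obtain C where C: "C \<in> P" "z \<in> C" using partition_onD1[OF P] z(1) by blast
    obtain w where w: "w \<in> C" "w \<noteq> z" using other[OF C] by blast
    have "C \<noteq> B" using gap_of[OF B(1,2) _ ] C z \<open>\<not> b \<le> z\<close> d(2) B(5) by fastforce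
    then have "w \<noteq> a" "w \<noteq> b" using partition_block_unique[OF P B(1) C(1)] B(2,3) w(1) by auto
    then consider "w < a" | "a < w \<and> w < b" | "b < w" by linarith
    then show False
    proof cases
      case 1 \<comment> \<open>\<open>w < a < z < b\<close> is a crossing\<close>
      then show False using nc C w B z(2) zb \<open>C \<noteq> B\<close> unfolding noncrossing_def by blast
    next
      case 2 \<comment> \<open>\<open>z\<close> and \<open>w\<close> are closer than \<open>a\<close> and \<open>b\<close>\<close>
      then show False using gap_of[OF C(1) C(2) w(1)] w(2) d(2) B(5) z \<open>\<not> b \<le> z\<close> by fastforce
    next
      case 3 \<comment> \<open>\<open>a < z < b < w\<close> is a crossing\<close>
      then show False using nc C w B z(2) zb \<open>C \<noteq> B\<close> unfolding noncrossing_def by blast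
    qed
  qed
  then have "nxt S a b" using B partition_block_subset[OF P B(1)] unfolding nxt_def by auto
  then show thesis using that B(1-4) nextc_iff[OF fin ne] by blast
qed

section \<open>Cycles of \<open>\<pi>\<gamma>\<close>\<close>

definition pi_gamma :: "nat set \<Rightarrow> nat set set \<Rightarrow> nat \<Rightarrow> nat" where
  "pi_gamma S P = perm_of_partition P \<circ> nextc S"

lemma pi_gamma_bij: "finite S \<Longrightarrow> partition_on S P \<Longrightarrow> bij_betw (pi_gamma S P) S S"
  unfolding pi_gamma_def using bij_betw_trans nextc_bij perm_of_partition_bij by blast

lemma pi_gamma_delete_point:
  assumes fin: "finite S" and P: "partition_on S P" and x: "x \<in> S" "x \<noteq> s"
  shows "pi_gamma (S - {s}) (delete_point P s) x
    = splice (perm_of_partition P) s (splice (nextc S) s x)"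
proof -
  have "nextc (S - {s}) x \<in> S - {s}" using nextc_in[of "S - {s}"] fin x by blast
  then show ?thesis
    unfolding pi_gamma_def using perm_of_partition_delete_point[OF fin P] nextc_delete[OF fin x]
    by auto
qed

lemma cycles_delete_singleton:
  assumes fin: "finite S" and P: "partition_on S P" and s: "{s} \<in> P"
  shows "card (orbs (S - {s}) (pi_gamma (S - {s}) (delete_point P s))) + (if S = {s} then 1 else 0)
    = card (orbs S (pi_gamma S P))"
proof -
  let ?p = "perm_of_partition P" and ?g = "nextc S" and ?f = "pi_gamma S P"
  have sS: "s \<in> S" using partition_block_subset[OF P s] by simp
  have p: "bij_betw ?p S S" and g: "bij_betw ?g S S"
    using perm_of_partition_bij[OF fin P] nextc_bij[OF fin] .
  have ps: "?p s = s" using perm_of_partition_block[OF P s] by (simp add: nextc_def)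
  have "?f s = s \<longleftrightarrow> ?g s = s"
    using inj_onD[OF bij_betw_imp_inj_on[OF p] _ nextc_in[OF fin] sS] ps sS
    unfolding pi_gamma_def by auto
  then have fixed: "?f s = s \<longleftrightarrow> S = {s}" using nextc_fixed_iff[OF fin sS] by simp
  have eq: "pi_gamma (S - {s}) (delete_point P s) x = splice ?f s x" if "x \<in> S - {s}" for x
    using pi_gamma_delete_point[OF fin P] splice_comp_fixed[OF p g sS ps] that
    unfolding pi_gamma_def by simp
  have "pi_gamma (S - {s}) (delete_point P s) ` (S - {s}) \<subseteq> S - {s}"
    using bij_betw_self_image[OF pi_gamma_bij] fin partition_on_delete_point[OF P] by simp
  then have "orbs (S - {s}) (pi_gamma (S - {s}) (delete_point P s)) = orbs (S - {s}) (splice ?f s)"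
    using orbs_cong eq by blast
  then show ?thesis using card_orbs_splice[OF fin pi_gamma_bij[OF fin P] sS] fixed by simp
qed

text \<open>Both
  \<open>\<gamma>\<close> and \<open>\<pi>\<close> send \<open>a\<close> to \<open>b\<close>, so deleting \<open>a\<close> and \<open>b\<close> splices them out of \<open>\<pi>\<gamma>\<close>.\<close>
context
  fixes S :: "nat set" and P :: "nat set set" and B :: "nat set" and a b :: nat
  assumes fin: "finite S" and P: "partition_on S P" and B: "B \<in> P" "a \<in> B" "b \<in> B"
    and ab: "a < b" and adjacent: "nextc S a = b"
begin

lemma adjacent_pair_in: "a \<in> S" "b \<in> S"
  using partition_block_subset[OF P B(1)] B(2,3) by auto

lemma perm_of_partition_pair: "perm_of_partition P a = b"
  using perm_of_partition_block[OF P B(1,2)] nextc_subset[OF fin partition_block_subset[OF P B(1)]]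
    B(2,3) ab adjacent by simp

lemma perm_of_partition_pair_back_iff: "perm_of_partition P b = a \<longleftrightarrow> B = {a, b}"
proof
  assume "perm_of_partition P b = a"
  then have "nextc B b = a" "nextc B a = b"
    using perm_of_partition_block[OF P B(1)] perm_of_partition_pair B(2,3) by auto
  then have "B \<subseteq> {a, b}" using nextc_swap partition_block_finite[OF fin P B(1)] ab B(2) by blast
  then show "B = {a, b}" using B(2,3) by blast
next
  assume "B = {a, b}"
  then show "perm_of_partition P b = a"
    using perm_of_partition_block[OF P B(1,3)] ab by (simp add: nextc_def)
qed

lemma pi_gamma_pair_fixed_iff: "pi_gamma S P a = a \<longleftrightarrow> B = {a, b}"
  using perm_of_partition_pair_back_iff adjacent unfolding pi_gamma_def by simp

lemma splice_pi_gamma_pair_fixed_iff: "splice (pi_gamma S P) a b = b \<longleftrightarrow> S = {a, b}"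
proof
  let ?p = "perm_of_partition P"
  have p_inj: "inj_on ?p S" using bij_betw_imp_inj_on[OF perm_of_partition_bij[OF fin P]] .
  have gb: "nextc S b \<in> S" using nextc_in[OF fin] adjacent_pair_in by blast
  assume fixed: "splice (pi_gamma S P) a b = b"
  show "S = {a, b}"
  proof (rule ccontr)
    assume "S \<noteq> {a, b}"
    then have "nextc S b \<noteq> a" using nextc_swap[OF fin ab adjacent_pair_in(1) adjacent] adjacent_pair_in by blast
    then have "?p (nextc S b) \<noteq> b"
      using inj_onD[OF p_inj] perm_of_partition_pair gb adjacent_pair_in by metis
    moreover have "?p b \<noteq> b" using inj_onD[OF p_inj] perm_of_partition_pair adjacent_pair_in ab by fastforce
    ultimately show False using fixed adjacent unfolding splice_def pi_gamma_def by (simp split: if_split_asm)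
  qed
next
  assume S: "S = {a, b}"
  then have "B = {a, b}" using partition_block_subset[OF P B(1)] B(2,3) by blast
  then show "splice (pi_gamma S P) a b = b"
    using S ab perm_of_partition_pair perm_of_partition_pair_back_iff
    unfolding splice_def pi_gamma_def by (simp add: nextc_def)
qed

lemma cycles_delete_pair:
  "card (orbs (S - {a} - {b}) (pi_gamma (S - {a} - {b}) (delete_point (delete_point P a) b)))
     + (if B = {a, b} then 1 else 0) + (if S = {a, b} then 1 else 0)
   = card (orbs S (pi_gamma S P))"
proof -
  let ?p = "perm_of_partition P" and ?g = "nextc S" and ?f = "pi_gamma S P"
  let ?S' = "S - {a} - {b}" and ?P' = "delete_point (delete_point P a) b"
  have p: "bij_betw ?p S S" and g: "bij_betw ?g S S" and f: "bij_betw ?f S S"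
    using perm_of_partition_bij[OF fin P] nextc_bij[OF fin] pi_gamma_bij[OF fin P] .
  have ne: "a \<noteq> b" using ab by simp
  have eq: "pi_gamma ?S' ?P' x = splice (splice ?f a) b x" if x: "x \<in> ?S'" for x
  proof -
    have x': "x \<in> S" "x \<noteq> a" "x \<noteq> b" using x by auto
    have "nextc ?S' x \<in> ?S'" using nextc_in[of ?S'] fin x by blast
    then have "pi_gamma ?S' ?P' x = splice (splice ?p a) b (splice (splice ?g a) b x)"
      unfolding pi_gamma_def using perm_of_partition_delete_two_points[OF fin P adjacent_pair_in(2) ne]
        nextc_delete_two_points[OF fin adjacent_pair_in(2) ne x'] by simp
    also have "\<dots> = splice (splice ?f a) b x"
      using splice_splice_comp[OF p g adjacent_pair_in ne adjacent perm_of_partition_pair x'] unfolding pi_gamma_def .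
    finally show ?thesis .
  qed
  have f': "bij_betw (splice ?f a) (S - {a}) (S - {a})" using splice_bij[OF fin f adjacent_pair_in(1)] .
  have "pi_gamma ?S' ?P' ` ?S' \<subseteq> ?S'"
    using bij_betw_self_image[OF pi_gamma_bij] fin partition_on_delete_point[OF partition_on_delete_point[OF P]]
    by simp
  then have "orbs ?S' (pi_gamma ?S' ?P') = orbs ?S' (splice (splice ?f a) b)"
    using orbs_cong eq by blast
  moreover have "card (orbs (S - {a}) (splice ?f a)) + (if ?f a = a then 1 else 0) = card (orbs S ?f)"
    using card_orbs_splice[OF fin f adjacent_pair_in(1)] .
  moreover have "card (orbs ?S' (splice (splice ?f a) b)) + (if splice ?f a b = b then 1 else 0)
      = card (orbs (S - {a}) (splice ?f a))"
    using card_orbs_splice[OF _ f', of b] fin adjacent_pair_in ne by simp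
  ultimately show ?thesis
    using pi_gamma_pair_fixed_iff splice_pi_gamma_pair_fixed_iff by simp
qed

end

lemma card_orbs_pi_gamma_singleton_step:
  assumes fin: "finite S" and P: "partition_on S P" and s: "{s} \<in> P"
    and IH: "S - {s} \<noteq> {} \<Longrightarrow> card (orbs (S - {s}) (pi_gamma (S - {s}) (delete_point P s)))
      = 1 + even_blocks (delete_point P s)"
  shows "card (orbs S (pi_gamma S P)) = 1 + even_blocks P"
proof -
  have cycles: "card (orbs (S - {s}) (pi_gamma (S - {s}) (delete_point P s)))
      + (if S = {s} then 1 else 0) = card (orbs S (pi_gamma S P))"
    using cycles_delete_singleton[OF fin P s] .
  have even: "even_blocks (delete_point P s) = even_blocks P"
    using even_blocks_delete_singleton[OF fin P s] .
  show ?thesis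
  proof (cases "S = {s}")
    case True
    then have "partition_on {} (delete_point P s)" using partition_on_delete_point[OF P, of s] by simp
    then have "delete_point P s = {}" unfolding partition_on_empty .
    then show ?thesis using cycles even True by (simp add: even_blocks_def)
  next
    case False
    then have "S - {s} \<noteq> {}" using partition_block_subset[OF P s] by blast
    then show ?thesis using IH cycles even False by simp
  qed
qed

lemma card_orbs_pi_gamma_pair_step:
  assumes fin: "finite S" and P: "partition_on S P"
    and B: "B \<in> P" "a \<in> B" "b \<in> B" "a < b" "nextc S a = b"
    and IH: "S - {a} - {b} \<noteq> {} \<Longrightarrow>
      card (orbs (S - {a} - {b}) (pi_gamma (S - {a} - {b}) (delete_point (delete_point P a) b)))
      = 1 + even_blocks (delete_point (delete_point P a) b)"
  shows "card (orbs S (pi_gamma S P)) = 1 + even_blocks P"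
proof -
  let ?S' = "S - {a} - {b}" and ?P' = "delete_point (delete_point P a) b"
  have cycles: "card (orbs ?S' (pi_gamma ?S' ?P'))
      + (if B = {a, b} then 1 else 0) + (if S = {a, b} then 1 else 0)
      = card (orbs S (pi_gamma S P))"
    using cycles_delete_pair[OF fin P B] .
  have even: "even_blocks ?P' + (if B = {a, b} then 1 else 0) = even_blocks P"
    using even_blocks_delete_pair[OF fin P B(1-3)] B(4) by simp
  have BS: "B \<subseteq> S" using partition_block_subset[OF P B(1)] .
  show ?thesis
  proof (cases "S = {a, b}")
    case True
    then have empty: "?S' = {}" by blast
    have "partition_on ?S' ?P'" by (rule partition_on_delete_point[OF partition_on_delete_point[OF P]])
    then have "?P' = {}" unfolding empty partition_on_empty .
    moreover have "B = {a, b}" using True BS B(2,3) by blast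
    ultimately show ?thesis using cycles even True B(4) by (simp add: even_blocks_def)
  next
    case False
    then have "?S' \<noteq> {}" using BS B(2,3) by blast
    then show ?thesis using IH cycles even False by simp
  qed
qed

text \<open>The main counting result, by induction on the size of the ground set: delete a
  singleton block if there is one, and otherwise an adjacent pair inside a block.\<close>
theorem card_orbs_pi_gamma:
  assumes "finite S" "S \<noteq> {}" "partition_on S P" "noncrossing P"
  shows "card (orbs S (pi_gamma S P)) = 1 + even_blocks P"
  using assms
proof (induction "card S" arbitrary: S P rule: less_induct)
  case less
  note fin = less.prems(1) and ne = less.prems(2) and P = less.prems(3) and nc = less.prems(4)
  have IH: "card (orbs S' (pi_gamma S' P')) = 1 + even_blocks P'"
    if "S' \<subset> S" "S' \<noteq> {}" "partition_on S' P'" "noncrossing P'" for S' P'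
    using less.hyps[OF psubset_card_mono[OF fin that(1)]
        finite_subset[OF psubset_imp_subset[OF that(1)] fin] that(2-4)] .
  show ?case
  proof (cases "\<exists>s. {s} \<in> P")
    case True
    then obtain s where s: "{s} \<in> P" by blast
    have "S - {s} \<subset> S" using partition_block_subset[OF P s] by blast
    then show ?thesis
      using card_orbs_pi_gamma_singleton_step[OF fin P s]
        IH[OF _ _ partition_on_delete_point[OF P] noncrossing_delete_point[OF nc]] by blast
  next
    case False
    then obtain B a b where B: "B \<in> P" "a \<in> B" "b \<in> B" "a < b" "nextc S a = b"
      using noncrossing_adjacent_pair[OF fin P nc _ ne] by blast
    have "S - {a} - {b} \<subset> S" using partition_block_subset[OF P B(1)] B(2) by blast
    then show ?thesis
      using card_orbs_pi_gamma_pair_step[OF fin P B]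
        IH[OF _ _ partition_on_delete_point[OF partition_on_delete_point[OF P]]
          noncrossing_delete_point[OF noncrossing_delete_point[OF nc]]] by blast
  qed
qed

theorem lemma1p1:
  fixes p :: nat and P :: "nat set set"
  assumes "p \<ge> 1" and "P \<in> NC p"
  shows "1 + even_blocks P = num_cycles p (perm_of_partition P \<circ> gamma p)"
proof -
  have P: "partition_on {1..p} P" and nc: "noncrossing P" using assms(2) unfolding NC_def by auto
  have "pi_gamma {1..p} P ` {1..p} \<subseteq> {1..p}"
    using bij_betw_self_image[OF pi_gamma_bij[OF _ P]] by simp
  moreover have "pi_gamma {1..p} P x = (perm_of_partition P \<circ> gamma p) x" if "x \<in> {1..p}" for x
    using gamma_eq_nextc[OF that] unfolding pi_gamma_def by simp
  ultimately have "orbs {1..p} (pi_gamma {1..p} P) = orbs {1..p} (perm_of_partition P \<circ> gamma p)"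
    by (rule orbs_cong)
  then have "num_cycles p (perm_of_partition P \<circ> gamma p) = card (orbs {1..p} (pi_gamma {1..p} P))"
    unfolding num_cycles_eq_card_orbs by simp
  also have "\<dots> = 1 + even_blocks P"
    using card_orbs_pi_gamma[OF _ _ P nc] assms(1) by simp
  finally show ?thesis by simp
qed

end
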